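(* Let $d>1$, $r>0$, and let $\mathbf{A}\subset\mathbb{E}^d$ be an $r$-ball body, i.e. $\mathbf{A}=X^r$ for some nonempty $X\subseteq\mathbb{E}^d$. Let $0<R<r$ and $\mathbf{B}=\mathbf{B}^d[\mathbf{o},r-R]$ with $V_d(\mathbf{A})=V_d(\mathbf{B})$; then $\mathbf{B}^r=\mathbf{B}^d[\mathbf{o},R]$ and $$V_1(\mathbf{A})+V_1(\mathbf{A}^r)=\frac{d\,\omega_d}{\omega_{d-1}}\,r=V_1(\mathbf{B})+V_1(\mathbf{B}^r).$$
   Context: $\mathbf{B}^d[\mathbf{p},r]=\{\mathbf{q}\in\mathbb{E}^d : |\mathbf{p}-\mathbf{q}|\le r\}$ and $\mathbf{o}$ is the origin. For a nonempty set $X\subseteq\mathbb{E}^d$ and $r>0$, $X^r:=\bigcap_{\mathbf{x}\in X}\mathbf{B}^d[\mathbf{x},r]$. $V_k$ denotes the $k$-th intrinsic volume ($V_d$ is volume, $V_1$ is the first intrinsic volume). $\omega_d=\pi^{d/2}/\Gamma(1+d/2)$ is the volume of the $d$-dimensional unit ball. *)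

theory Defs
  imports "HOL-Analysis.Analysis"
begin

definition ball_dual :: "real \<Rightarrow> 'a::euclidean_space set \<Rightarrow> 'a set" where
  "ball_dual r X = (\<Inter>x\<in>X. cball x r)"

definition omega :: "nat \<Rightarrow> real" where
  "omega d = pi powr (real d / 2) / Gamma (1 + real d / 2)"

definition vol :: "'a::euclidean_space set \<Rightarrow> real" where
  "vol K = measure lebesgue K"

definition parallel_body :: "'a::euclidean_space set \<Rightarrow> real \<Rightarrow> 'a set" where
  "parallel_body K t = {x + y | x y. x \<in> K \<and> y \<in> cball 0 t}"

text \<open>First intrinsic volume, via the Steiner formula
  vol(K + tB) = omega_d t^d + omega_{d-1} V_1(K) t^{d-1} + (lower order terms):
  V_1(K) is the coefficient of t^{d-1} divided by omega_{d-1}.\<close>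
definition V1 :: "'a::euclidean_space set \<Rightarrow> real" where
  "V1 K = lim (\<lambda>n::nat. (vol (parallel_body K (real n))
              - omega DIM('a) * real n ^ DIM('a))
             / (omega (DIM('a) - 1) * real n ^ (DIM('a) - 1)))"

end

(*
  For the support function h of an r-ball body A = X^r and a unit vector u, the ball of radius r
  touching A from inside at its support point p in direction u contains A: otherwise moving p
  slightly towards an outlying point and then in direction u would stay in every ball B[x, r],
  x in X (the distances grow only to second order), and increase the height. Hence its centre
  p - r u lies in A^r, and with the trivial bound from |p - c| <= r for c in A^r this gives
  h_A(u) + h_{A^r}(-u) = r.

  The parallel body K + tB^d is squeezed between the star-shaped sets with radial functions
  t + h_K(u) and t + h_K(u) - D^2/t (D a bound for K). Computing their volumes in polar coordinates
  yields vol(K + tB^d) = omega_d t^d + d t^(d-1) J(K) + O(t^(d-2)) with J(K) the integral of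
  h_K(x/|x|) over the unit ball, so V_1(K) = d J(K) / omega_(d-1). Since V_1 is invariant under
  reflection, integrating the support function identity gives V_1(A) + V_1(A^r) = d omega_d r / omega_(d-1).
  The ball B[o, r - R] is the r-ball body of B[o, R], so the identity also applies to it.
*)
theory Submission
  imports Defs
begin

section \<open>Support functions\<close>

definition support_fun :: "'a::real_inner set \<Rightarrow> 'a \<Rightarrow> real" where
  "support_fun K u = Sup ((\<lambda>k. k \<bullet> u) ` K)"

lemma support_fun_attained:
  fixes K :: "'a::real_inner set"
  assumes "compact K" "K \<noteq> {}"
  obtains p where "p \<in> K" "support_fun K u = p \<bullet> u" "\<And>k. k \<in> K \<Longrightarrow> k \<bullet> u \<le> p \<bullet> u"
proof -
  have "continuous_on K (\<lambda>k. k \<bullet> u)"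
    by (intro continuous_intros)
  from continuous_attains_sup[OF assms this]
  obtain p where p: "p \<in> K" "\<And>k. k \<in> K \<Longrightarrow> k \<bullet> u \<le> p \<bullet> u"
    by blast
  moreover have "support_fun K u = p \<bullet> u"
    unfolding support_fun_def by (rule cSup_eq_maximum) (use p in auto)
  ultimately show ?thesis
    using that by blast
qed

lemma inner_le_support_fun:
  fixes K :: "'a::real_inner set"
  assumes "compact K" "k \<in> K"
  shows "k \<bullet> u \<le> support_fun K u"
  using assms by (metis empty_iff support_fun_attained)

lemma support_fun_uminus: "support_fun (uminus ` K) u = support_fun K (- u)"
  unfolding support_fun_def image_image by simp

lemma support_fun_diff_le:
  fixes K :: "'a::real_inner set"
  assumes "compact K" "K \<noteq> {}" "\<And>k. k \<in> K \<Longrightarrow> norm k \<le> D"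
  shows "support_fun K u - support_fun K v \<le> D * norm (u - v)"
proof -
  obtain p where p: "p \<in> K" "support_fun K u = p \<bullet> u"
    using support_fun_attained[OF assms(1,2)] by blast
  have "p \<bullet> (u - v) \<le> norm p * norm (u - v)"
    by (rule norm_cauchy_schwarz)
  also have "\<dots> \<le> D * norm (u - v)"
    using assms(3)[OF p(1)] by (simp add: mult_right_mono)
  finally have "p \<bullet> (u - v) \<le> D * norm (u - v)" .
  moreover have "p \<bullet> v \<le> support_fun K v"
    using assms(1) p(1) by (rule inner_le_support_fun)
  ultimately show ?thesis
    using p by (simp add: inner_diff_right)
qed

lemma abs_support_fun_le:
  fixes K :: "'a::real_inner set"
  assumes "compact K" "K \<noteq> {}" "\<And>k. k \<in> K \<Longrightarrow> norm k \<le> D"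
  shows "\<bar>support_fun K u\<bar> \<le> D * norm u"
proof -
  have "support_fun K 0 = 0"
    using assms(2) unfolding support_fun_def by (simp add: image_constant_conv)
  then show ?thesis
    using support_fun_diff_le[OF assms, of u 0] support_fun_diff_le[OF assms, of 0 u] by simp
qed

lemma abs_support_fun_sgn_le:
  fixes K :: "'a::real_inner set"
  assumes "compact K" "K \<noteq> {}" "\<And>k. k \<in> K \<Longrightarrow> norm k \<le> D"
  shows "\<bar>support_fun K (sgn x)\<bar> \<le> D"
proof -
  have "0 \<le> D"
    using assms(2,3) norm_ge_zero order_trans by blast
  then have "D * norm (sgn x) \<le> D"
    by (simp add: norm_sgn)
  then show ?thesis
    using abs_support_fun_le[OF assms, of "sgn x"] by linarith
qed

lemma continuous_on_support_fun:
  fixes K :: "'a::real_inner set"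
  assumes "compact K" "K \<noteq> {}"
  shows "continuous_on UNIV (support_fun K)"
proof -
  obtain D where D: "D > 0" "\<And>k. k \<in> K \<Longrightarrow> norm k \<le> D"
    using compact_imp_bounded[OF assms(1)] bounded_pos by blast
  have "D-lipschitz_on UNIV (support_fun K)"
  proof (rule lipschitz_onI)
    fix u v
    show "dist (support_fun K u) (support_fun K v) \<le> D * dist u v"
      using support_fun_diff_le[OF assms D(2), of u v] support_fun_diff_le[OF assms D(2), of v u]
      by (simp add: dist_real_def dist_norm norm_minus_commute)
  qed (use D in simp)
  then show ?thesis
    by (rule lipschitz_on_continuous_on)
qed

lemma borel_measurable_support_fun_sgn [measurable]:
  fixes K :: "'a::euclidean_space set"
  assumes "compact K" "K \<noteq> {}"
  shows "(\<lambda>x. support_fun K (sgn x)) \<in> borel_measurable lebesgue"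
proof -
  have "support_fun K \<in> borel_measurable borel"
    using continuous_on_support_fun[OF assms] by (rule borel_measurable_continuous_onI)
  then have "(\<lambda>x. support_fun K (sgn x)) \<in> borel_measurable borel"
    by measurable
  from measurable_compose[OF id_borel_measurable_lebesgue this] show ?thesis
    by (simp add: id_def)
qed

section \<open>Ball bodies\<close>

lemma ball_dual_cball:
  fixes r \<rho> :: real
  assumes "0 \<le> \<rho>" "\<rho> \<le> r"
  shows "ball_dual r (cball (0::'a::euclidean_space) \<rho>) = cball 0 (r - \<rho>)"
proof (intro equalityI subsetI)
  fix x :: 'a
  assume x: "x \<in> ball_dual r (cball 0 \<rho>)"
  show "x \<in> cball 0 (r - \<rho>)"
  proof (cases "x = 0")
    case True
    with assms show ?thesis by simp
  next
    case False
    define b where "b = - (\<rho> / norm x) *\<^sub>R x"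
    have "norm b = \<rho>"
      using False assms by (simp add: b_def)
    then have "dist b x \<le> r"
      using x unfolding ball_dual_def by auto
    moreover have "b - x = - ((1 + \<rho> / norm x) *\<^sub>R x)"
      by (simp add: b_def algebra_simps)
    then have "dist b x = norm x + \<rho>"
      using False assms by (simp add: dist_norm distrib_right)
    ultimately show ?thesis by simp
  qed
next
  fix x :: 'a
  assume "x \<in> cball 0 (r - \<rho>)"
  then have "dist y x \<le> r" if "y \<in> cball 0 \<rho>" for y
    using that norm_triangle_ineq4[of y x] by (simp add: dist_norm)
  then show "x \<in> ball_dual r (cball 0 \<rho>)"
    unfolding ball_dual_def by auto
qed

lemma compact_ball_dual:
  assumes "X \<noteq> {}"
  shows "compact (ball_dual r X)"
proof -
  obtain x where "x \<in> X" using assms by blast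
  then have "bounded (ball_dual r X)"
    unfolding ball_dual_def by (meson INT_lower bounded_cball bounded_subset)
  moreover have "closed (ball_dual r X)"
    unfolding ball_dual_def by (auto intro: closed_INT)
  ultimately show ?thesis
    by (simp add: compact_eq_bounded_closed)
qed

lemma subset_ball_dual_ball_dual: "X \<subseteq> ball_dual r (ball_dual r X)"
  unfolding ball_dual_def by (auto simp: dist_commute)

lemma norm_pushed_combination_le:
  fixes P v u :: "'a::real_inner"
  assumes u: "norm u = 1" and P: "norm P \<le> r" "norm (P + v) \<le> r"
    and \<eta>: "0 \<le> \<eta>" "\<eta> \<le> 1" and \<gamma>: "0 \<le> \<gamma>"
    and balance: "\<eta> * (\<gamma>\<^sup>2 + (norm v)\<^sup>2) = (norm v)\<^sup>2 - 2 * r * \<gamma>"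
  shows "norm (P + \<eta> *\<^sub>R v + (\<eta> * \<gamma>) *\<^sub>R u) \<le> r"
proof -
  define w where "w = P + \<eta> *\<^sub>R v"
  have r: "0 \<le> r"
    using P(1) norm_ge_zero order_trans by blast
  have "(norm w)\<^sup>2 = (1 - \<eta>) * (norm P)\<^sup>2 + \<eta> * (norm (P + v))\<^sup>2 - \<eta> * (1 - \<eta>) * (norm v)\<^sup>2"
    unfolding w_def
    by (simp add: power2_norm_eq_inner inner_add_left inner_add_right inner_commute algebra_simps)
  also have "\<dots> \<le> (1 - \<eta>) * r\<^sup>2 + \<eta> * r\<^sup>2 - \<eta> * (1 - \<eta>) * (norm v)\<^sup>2"
    using P \<eta> r by (intro diff_right_mono add_mono mult_left_mono power_mono) auto
  finally have w2: "(norm w)\<^sup>2 \<le> r\<^sup>2 - \<eta> * (1 - \<eta>) * (norm v)\<^sup>2"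
    by (simp add: algebra_simps)
  moreover have "0 \<le> \<eta> * (1 - \<eta>) * (norm v)\<^sup>2"
    using \<eta> by simp
  ultimately have "(norm w)\<^sup>2 \<le> r\<^sup>2"
    by linarith
  then have "norm w \<le> r"
    using r by (rule power2_le_imp_le)
  then have uw: "u \<bullet> w \<le> r"
    using Cauchy_Schwarz_ineq2[of u w] u by simp
  have "(norm (w + (\<eta> * \<gamma>) *\<^sub>R u))\<^sup>2 = (norm w)\<^sup>2 + 2 * (\<eta> * \<gamma>) * (u \<bullet> w) + (\<eta> * \<gamma>)\<^sup>2"
    using dot_norm[of w "(\<eta> * \<gamma>) *\<^sub>R u"] u by (simp add: inner_commute power_mult_distrib)
  also have "\<dots> \<le> r\<^sup>2 - \<eta> * (1 - \<eta>) * (norm v)\<^sup>2 + 2 * (\<eta> * \<gamma>) * r + (\<eta> * \<gamma>)\<^sup>2"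
    using w2 uw \<eta> \<gamma> by (intro add_mono mult_left_mono) auto
  also have "\<dots> = r\<^sup>2 - \<eta> * ((norm v)\<^sup>2 - 2 * r * \<gamma> - \<eta> * (\<gamma>\<^sup>2 + (norm v)\<^sup>2))"
    by (simp add: algebra_simps power2_eq_square)
  also have "\<dots> = r\<^sup>2"
    using balance by simp
  finally show ?thesis
    using r by (simp add: w_def power2_le_iff_abs_le)
qed

lemma pushed_point_in_ball_dual:
  fixes X :: "'a::euclidean_space set"
  assumes u: "norm u = 1" and "p \<in> ball_dual r X" "a \<in> ball_dual r X"
    and "0 \<le> \<eta>" "\<eta> \<le> 1" "0 \<le> \<gamma>"
    and "\<eta> * (\<gamma>\<^sup>2 + (norm (a - p))\<^sup>2) = (norm (a - p))\<^sup>2 - 2 * r * \<gamma>"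
  shows "p + \<eta> *\<^sub>R (a - p) + (\<eta> * \<gamma>) *\<^sub>R u \<in> ball_dual r X"
  unfolding ball_dual_def
proof
  fix x
  assume "x \<in> X"
  then have "norm (p - x) \<le> r" "norm (p - x + (a - p)) \<le> r"
    using assms(2,3) by (auto simp: ball_dual_def dist_norm norm_minus_commute)
  then have "norm (p - x + \<eta> *\<^sub>R (a - p) + (\<eta> * \<gamma>) *\<^sub>R u) \<le> r"
    using assms(4-7) by (intro norm_pushed_combination_le[OF u]) auto
  moreover have "p - x + \<eta> *\<^sub>R (a - p) + (\<eta> * \<gamma>) *\<^sub>R u = (p + \<eta> *\<^sub>R (a - p) + (\<eta> * \<gamma>) *\<^sub>R u) - x"
    by (simp add: algebra_simps)
  ultimately show "p + \<eta> *\<^sub>R (a - p) + (\<eta> * \<gamma>) *\<^sub>R u \<in> cball x r"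
    by (simp only: mem_cball dist_norm norm_minus_commute[of x])
qed

lemma push_parameters_exist:
  fixes g N r :: real
  assumes "0 < r" "0 < N" "g < N / (2 * r)"
  obtains \<gamma> \<eta> where "g < \<gamma>" "0 \<le> \<gamma>" "0 < \<eta>" "\<eta> \<le> 1" "\<eta> * (\<gamma>\<^sup>2 + N) = N - 2 * r * \<gamma>"
proof -
  define \<gamma> where "\<gamma> = (max g 0 + N / (2 * r)) / 2"
  have "0 < N / (2 * r)"
    using assms by simp
  then have \<gamma>: "g < \<gamma>" "0 < \<gamma>" "\<gamma> < N / (2 * r)"
    using assms(3) by (auto simp: \<gamma>_def max_def)
  then have "0 < N - 2 * r * \<gamma>" "0 \<le> 2 * r * \<gamma>"
    using assms(1) by (simp_all add: field_simps)
  moreover have "0 < \<gamma>\<^sup>2 + N"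
    using assms(2) by (simp add: add_nonneg_pos)
  moreover have "- (2 * r * \<gamma>) \<le> \<gamma>\<^sup>2"
    using \<open>0 \<le> 2 * r * \<gamma>\<close> zero_le_power2[of \<gamma>] by linarith
  ultimately have "0 < (N - 2 * r * \<gamma>) / (\<gamma>\<^sup>2 + N)" "(N - 2 * r * \<gamma>) / (\<gamma>\<^sup>2 + N) \<le> 1"
    "(N - 2 * r * \<gamma>) / (\<gamma>\<^sup>2 + N) * (\<gamma>\<^sup>2 + N) = N - 2 * r * \<gamma>"
    by simp_all
  with \<gamma> show ?thesis
    using that by (meson less_imp_le)
qed

lemma ball_dual_subset_cball_at_support_point:
  fixes X :: "'a::euclidean_space set"
  assumes r: "r > 0" and u: "norm u = 1" and p: "p \<in> ball_dual r X"
    and p_max: "\<And>q. q \<in> ball_dual r X \<Longrightarrow> q \<bullet> u \<le> p \<bullet> u"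
  shows "ball_dual r X \<subseteq> cball (p - r *\<^sub>R u) r"
proof
  fix a
  assume a: "a \<in> ball_dual r X"
  show "a \<in> cball (p - r *\<^sub>R u) r"
  proof (rule ccontr)
    define v where "v = a - p"
    assume "a \<notin> cball (p - r *\<^sub>R u) r"
    moreover have "dist (p - r *\<^sub>R u) a = norm (v + r *\<^sub>R u)"
      by (simp add: v_def dist_norm norm_minus_commute algebra_simps)
    ultimately have "r\<^sup>2 < (norm (v + r *\<^sub>R u))\<^sup>2"
      using r by (simp add: power_strict_mono)
    also have "\<dots> = (norm v)\<^sup>2 + 2 * r * (v \<bullet> u) + r\<^sup>2"
      using dot_norm[of v "r *\<^sub>R u"] u r by (simp add: power_mult_distrib)
    finally have "- (v \<bullet> u) < (norm v)\<^sup>2 / (2 * r)" and "0 < (norm v)\<^sup>2"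
      using r by (auto simp: field_simps)
    then obtain \<gamma> \<eta> where \<gamma>: "- (v \<bullet> u) < \<gamma>" "0 \<le> \<gamma>"
      and \<eta>: "0 < \<eta>" "\<eta> \<le> 1" "\<eta> * (\<gamma>\<^sup>2 + (norm v)\<^sup>2) = (norm v)\<^sup>2 - 2 * r * \<gamma>"
      using push_parameters_exist[OF r] by blast
    have "p + \<eta> *\<^sub>R v + (\<eta> * \<gamma>) *\<^sub>R u \<in> ball_dual r X"
      unfolding v_def using u p a \<gamma> \<eta> by (intro pushed_point_in_ball_dual) (auto simp: v_def)
    then have "(p + \<eta> *\<^sub>R v + (\<eta> * \<gamma>) *\<^sub>R u) \<bullet> u \<le> p \<bullet> u"
      by (rule p_max)
    moreover have "(p + \<eta> *\<^sub>R v + (\<eta> * \<gamma>) *\<^sub>R u) \<bullet> u = p \<bullet> u + \<eta> * (v \<bullet> u + \<gamma>)"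
      using u by (simp add: inner_add_left algebra_simps power2_norm_eq_inner[symmetric])
    moreover have "0 < \<eta> * (v \<bullet> u + \<gamma>)"
      using \<eta> \<gamma> by simp
    ultimately show False
      by simp
  qed
qed

lemma support_fun_ball_dual_add:
  fixes X :: "'a::euclidean_space set"
  assumes r: "r > 0" and X: "X \<noteq> {}" and A: "ball_dual r X \<noteq> {}" and u: "norm u = 1"
  shows "support_fun (ball_dual r X) u + support_fun (ball_dual r (ball_dual r X)) (- u) = r"
proof -
  define A where "A = ball_dual r X"
  have cA: "compact A" and cAr: "compact (ball_dual r A)"
    using X A by (simp_all add: A_def compact_ball_dual)
  have "ball_dual r A \<noteq> {}"
    using subset_ball_dual_ball_dual[of X r] X by (auto simp: A_def)
  obtain p where p: "p \<in> A" "support_fun A u = p \<bullet> u" "\<And>k. k \<in> A \<Longrightarrow> k \<bullet> u \<le> p \<bullet> u"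
    using support_fun_attained[OF cA] A by (auto simp: A_def)
  obtain c where c: "c \<in> ball_dual r A" "support_fun (ball_dual r A) (- u) = c \<bullet> (- u)"
    using support_fun_attained[OF cAr \<open>ball_dual r A \<noteq> {}\<close>] by blast
  have "dist c p \<le> r"
    using c(1) p(1) by (auto simp: ball_dual_def dist_commute)
  then have "(p - c) \<bullet> u \<le> r"
    using Cauchy_Schwarz_ineq2[of "p - c" u] u by (simp add: dist_norm norm_minus_commute)
  then have "support_fun A u + support_fun (ball_dual r A) (- u) \<le> r"
    using p c by (simp add: inner_diff_left)
  moreover have "p - r *\<^sub>R u \<in> ball_dual r A"
    using ball_dual_subset_cball_at_support_point[OF r u p(1)[unfolded A_def]] p(3)
    by (auto simp: A_def ball_dual_def dist_commute)
  then have "r - p \<bullet> u \<le> support_fun (ball_dual r A) (- u)"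
    using inner_le_support_fun[OF cAr, of _ "- u"] u
    by (force simp: inner_diff_left power2_norm_eq_inner[symmetric])
  ultimately show ?thesis
    using p by (simp add: A_def)
qed

section \<open>Volume of star-shaped sets\<close>

definition radial_set :: "('a::real_normed_vector \<Rightarrow> real) \<Rightarrow> 'a set" where
  "radial_set F = {x. norm x \<le> F x}"

lemma omega_pos: "omega n > 0"
  unfolding omega_def by (intro divide_pos_pos) (auto intro!: Gamma_real_pos simp: add_pos_nonneg)

lemma measure_unit_cball: "measure lebesgue (cball (0::'a::euclidean_space) 1) = omega DIM('a)"
proof -
  have "measure lebesgue (cball (0::'a) 1) = measure lborel (cball (0::'a) 1)"
    by (rule measure_completion) simp
  also have "\<dots> = unit_ball_vol DIM('a) * 1 ^ DIM('a)"
    by (rule content_cball) simp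
  also have "\<dots> = omega DIM('a)"
    by (simp add: unit_ball_vol_def omega_def add.commute)
  finally show ?thesis .
qed

lemma integrable_indicator_cball_mult:
  fixes f :: "'a::euclidean_space \<Rightarrow> real"
  assumes [measurable]: "f \<in> borel_measurable lebesgue" and bound: "\<And>x. \<bar>f x\<bar> \<le> B"
  shows "integrable lebesgue (\<lambda>x. indicator (cball (0::'a) 1) x * f x)"
proof -
  have "integrable lebesgue (\<lambda>x. indicator (cball (0::'a) 1) x *\<^sub>R f x)"
  proof (rule integrableI_bounded_set_indicator[where B = B])
    show "emeasure lebesgue (cball (0::'a) 1) < \<infinity>"
      using lmeasurable_cball by (auto simp: fmeasurable_def)
  qed (use bound in auto)
  then show ?thesis
    by simp
qed

lemma integral_indicator_cball_affine:
  fixes H :: "'a::euclidean_space \<Rightarrow> real"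
  assumes "integrable lebesgue (\<lambda>x. indicator (cball (0::'a) 1) x * H x)"
  shows "(\<integral>x. indicator (cball (0::'a) 1) x * (\<alpha> + \<beta> * H x) \<partial>lebesgue)
    = \<alpha> * omega DIM('a) + \<beta> * (\<integral>x. indicator (cball (0::'a) 1) x * H x \<partial>lebesgue)"
proof -
  have "integrable lebesgue (\<lambda>x. \<alpha> * indicator (cball (0::'a) 1) x)"
    using lmeasurable_cball[unfolded lmeasurable_iff_integrable] by (rule integrable_mult_right)
  moreover have "(\<integral>x. indicator (cball (0::'a) 1) x * (\<alpha> + \<beta> * H x) \<partial>lebesgue)
      = (\<integral>x. \<alpha> * indicator (cball (0::'a) 1) x + \<beta> * (indicator (cball (0::'a) 1) x * H x) \<partial>lebesgue)"
    by (simp add: algebra_simps)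
  ultimately show ?thesis
    using assms by (simp add: measure_unit_cball)
qed

lemma radial_set_in_sets [measurable]:
  fixes F :: "'a::euclidean_space \<Rightarrow> real"
  assumes [measurable]: "F \<in> borel_measurable lebesgue"
  shows "radial_set F \<in> sets lebesgue"
proof -
  have [measurable]: "norm \<in> borel_measurable lebesgue"
    using measurable_compose[OF id_borel_measurable_lebesgue borel_measurable_norm] by (simp add: id_def)
  have "{x \<in> space lebesgue. norm x \<le> F x} \<in> sets lebesgue"
    by measurable
  then show ?thesis
    by (simp add: radial_set_def)
qed

lemma radial_set_lmeasurable:
  fixes F :: "'a::euclidean_space \<Rightarrow> real"
  assumes "F \<in> borel_measurable lebesgue" "\<And>x. F x \<le> M"
  shows "radial_set F \<in> lmeasurable"
proof (rule fmeasurableI2[OF lmeasurable_cball])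
  show "radial_set F \<subseteq> cball 0 M"
    by (auto simp: radial_set_def intro: order_trans[OF _ assms(2)])
qed (use assms(1) in measurable)

lemma measure_radial_set_mono:
  fixes F G :: "'a::euclidean_space \<Rightarrow> real"
  assumes "F \<in> borel_measurable lebesgue" "G \<in> borel_measurable lebesgue"
    and "\<And>x. F x \<le> G x" "\<And>x. G x \<le> M"
  shows "measure lebesgue (radial_set F) \<le> measure lebesgue (radial_set G)"
  by (rule measure_mono_fmeasurable[OF _ radial_set_in_sets[OF assms(1)] radial_set_lmeasurable[OF assms(2,4)]])
    (auto simp: radial_set_def intro: order_trans[OF _ assms(3)])

lemma measure_cone_Int_cball:
  fixes C :: "'a::euclidean_space set"
  assumes cone: "\<And>x s. x \<in> C \<Longrightarrow> s > 0 \<Longrightarrow> s *\<^sub>R x \<in> C" and "a \<ge> 0"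
  shows "measure lebesgue (C \<inter> cball 0 a) = a ^ DIM('a) * measure lebesgue (C \<inter> cball 0 1)"
proof (cases "a = 0")
  case True
  then have "C \<inter> cball 0 a \<subseteq> {0}"
    by auto
  then have "measure lebesgue (C \<inter> cball 0 a) = 0"
    by (meson negligible_imp_measure0 negligible_sing negligible_subset)
  with True show ?thesis
    by simp
next
  case False
  with \<open>a \<ge> 0\<close> have a: "a > 0"
    by simp
  have "C \<inter> cball 0 a = (\<lambda>x. a *\<^sub>R x + 0) ` (C \<inter> cball 0 1)"
  proof (intro equalityI subsetI)
    fix y
    assume y: "y \<in> C \<inter> cball 0 a"
    then have "(1 / a) *\<^sub>R y \<in> C \<inter> cball 0 1"
      using a cone[of y "1 / a"] by (auto simp: field_simps)
    moreover have "y = a *\<^sub>R ((1 / a) *\<^sub>R y) + 0"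
      using a by simp
    ultimately show "y \<in> (\<lambda>x. a *\<^sub>R x + 0) ` (C \<inter> cball 0 1)"
      by blast
  next
    fix y
    assume "y \<in> (\<lambda>x. a *\<^sub>R x + 0) ` (C \<inter> cball 0 1)"
    then obtain x where "x \<in> C" "norm x \<le> 1" "y = a *\<^sub>R x"
      by auto
    then show "y \<in> C \<inter> cball 0 a"
      using a cone[of x a] by (auto simp: mult_left_le)
  qed
  then show ?thesis
    using measure_lebesgue_affine[of a 0 "C \<inter> cball 0 1"] a by simp
qed

lemma measure_radial_set_finite_range:
  fixes G :: "'a::euclidean_space \<Rightarrow> real"
  assumes "finite V" and range: "\<And>x. G x \<in> V" and nonneg: "\<And>v. v \<in> V \<Longrightarrow> 0 \<le> v"
    and [measurable]: "G \<in> borel_measurable lebesgue"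
    and homogeneous: "\<And>x s. s > 0 \<Longrightarrow> G (s *\<^sub>R x) = G x"
  shows "measure lebesgue (radial_set G) = (\<integral>x. indicator (cball 0 1) x * G x ^ DIM('a) \<partial>lebesgue)"
proof -
  define C where "C v = {x. G x = v}" for v
  have C_sets [measurable]: "C v \<in> sets lebesgue" for v
  proof -
    have "{x \<in> space lebesgue. G x = v} \<in> sets lebesgue"
      by measurable
    then show ?thesis
      by (simp add: C_def)
  qed
  have C_lmeasurable: "C v \<inter> cball 0 a \<in> lmeasurable" for v a
    using fmeasurable_Int_fmeasurable[OF lmeasurable_cball C_sets] by (simp add: Int_commute)
  have "radial_set G = (\<Union>v\<in>V. C v \<inter> cball 0 v)"
    using range by (auto simp: radial_set_def C_def)
  then have "measure lebesgue (radial_set G) = measure lebesgue (\<Union>v\<in>V. C v \<inter> cball 0 v)"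
    by simp
  also have "\<dots> = (\<Sum>v\<in>V. measure lebesgue (C v \<inter> cball 0 v))"
  proof (rule measure_finite_Union[OF \<open>finite V\<close>])
    show "(\<lambda>v. C v \<inter> cball 0 v) ` V \<subseteq> sets lebesgue"
      using C_lmeasurable by blast
    show "disjoint_family_on (\<lambda>v. C v \<inter> cball 0 v) V"
      by (auto simp: disjoint_family_on_def C_def)
    show "emeasure lebesgue (C v \<inter> cball 0 v) \<noteq> \<infinity>" for v
      using fmeasurableD2[OF C_lmeasurable[of v v]] by simp
  qed
  also have "\<dots> = (\<Sum>v\<in>V. v ^ DIM('a) * measure lebesgue (C v \<inter> cball 0 1))"
    using homogeneous nonneg by (intro sum.cong refl measure_cone_Int_cball) (auto simp: C_def)
  also have "\<dots> = (\<Sum>v\<in>V. (\<integral>x. v ^ DIM('a) * indicator (C v \<inter> cball 0 1) x \<partial>lebesgue))"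
    by simp
  also have "\<dots> = (\<integral>x. (\<Sum>v\<in>V. v ^ DIM('a) * indicator (C v \<inter> cball 0 1) x) \<partial>lebesgue)"
    using C_lmeasurable[unfolded lmeasurable_iff_integrable]
    by (intro Bochner_Integration.integral_sum[symmetric] integrable_mult_right)
  also have "\<dots> = (\<integral>x. indicator (cball 0 1) x * G x ^ DIM('a) \<partial>lebesgue)"
  proof (rule Bochner_Integration.integral_cong[OF refl])
    fix x
    have "(\<Sum>v\<in>V. v ^ DIM('a) * indicator (C v \<inter> cball 0 1) x)
        = (\<Sum>v\<in>V. if G x = v then v ^ DIM('a) * indicator (cball 0 1) x else 0)"
      by (intro sum.cong) (auto simp: C_def indicator_def)
    also have "\<dots> = indicator (cball 0 1) x * G x ^ DIM('a)"
      using range[of x] \<open>finite V\<close> by (simp add: sum.delta)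
    finally show "(\<Sum>v\<in>V. v ^ DIM('a) * indicator (C v \<inter> cball 0 1) x) = indicator (cball 0 1) x * G x ^ DIM('a)" .
  qed
  finally show ?thesis .
qed

lemma power_diff_le_mult_diff:
  fixes a b :: real
  assumes "0 \<le> b" "b \<le> a"
  shows "a ^ n - b ^ n \<le> real n * a ^ (n - 1) * (a - b)"
proof -
  have "a ^ n - b ^ n = (a - b) * (\<Sum>i<n. b ^ (n - Suc i) * a ^ i)"
    by (rule power_diff_sumr2)
  also have "\<dots> \<le> (a - b) * (\<Sum>i<n. a ^ (n - 1))"
  proof (intro mult_left_mono sum_mono)
    fix i
    assume "i \<in> {..<n}"
    then have "a ^ (n - Suc i) * a ^ i = a ^ (n - 1)"
      by (simp add: power_add[symmetric])
    moreover have "b ^ (n - Suc i) * a ^ i \<le> a ^ (n - Suc i) * a ^ i"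
      using assms by (intro mult_right_mono power_mono) auto
    ultimately show "b ^ (n - Suc i) * a ^ i \<le> a ^ (n - 1)"
      by simp
  qed (use assms in auto)
  finally show ?thesis
    by (simp add: algebra_simps)
qed

lemma integrable_indicator_cball_power:
  fixes F :: "'a::euclidean_space \<Rightarrow> real"
  assumes "F \<in> borel_measurable lebesgue" "\<And>x. 0 \<le> F x" "\<And>x. F x \<le> M"
  shows "integrable lebesgue (\<lambda>x. indicator (cball 0 1) x * F x ^ n)"
proof (rule integrable_indicator_cball_mult)
  show "(\<lambda>x. F x ^ n) \<in> borel_measurable lebesgue"
    using assms(1) by measurable
  show "\<bar>F x ^ n\<bar> \<le> M ^ n" for x
    using assms(2,3)[of x] by (simp add: power_mono)
qed

lemma integral_cball_power_mono:
  fixes F G :: "'a::euclidean_space \<Rightarrow> real"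
  assumes "F \<in> borel_measurable lebesgue" "G \<in> borel_measurable lebesgue"
    and "\<And>x. 0 \<le> F x" "\<And>x. F x \<le> G x" "\<And>x. G x \<le> M"
  shows "(\<integral>x. indicator (cball 0 1) x * F x ^ n \<partial>lebesgue)
    \<le> (\<integral>x. indicator (cball 0 1) x * G x ^ n \<partial>lebesgue)"
proof (rule integral_mono)
  have G_nonneg: "0 \<le> G x" and F_le: "F x \<le> M" for x
    using assms(3-5)[of x] by linarith+
  show "integrable lebesgue (\<lambda>x. indicator (cball 0 1) x * F x ^ n)"
    by (rule integrable_indicator_cball_power[OF assms(1,3) F_le])
  show "integrable lebesgue (\<lambda>x. indicator (cball 0 1) x * G x ^ n)"
    by (rule integrable_indicator_cball_power[OF assms(2) G_nonneg assms(5)])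
  show "indicator (cball 0 1) x * F x ^ n \<le> indicator (cball 0 1) x * G x ^ n" for x
    using assms by (intro mult_left_mono power_mono) auto
qed

lemma integral_cball_power_diff_le:
  fixes F G :: "'a::euclidean_space \<Rightarrow> real"
  assumes "F \<in> borel_measurable lebesgue" "G \<in> borel_measurable lebesgue"
    and "\<And>x. 0 \<le> F x" "\<And>x. F x \<le> G x" "\<And>x. G x \<le> M" "\<And>x. G x - F x \<le> \<delta>"
  shows "(\<integral>x. indicator (cball 0 1) x * G x ^ DIM('a) \<partial>lebesgue)
      - (\<integral>x. indicator (cball 0 1) x * F x ^ DIM('a) \<partial>lebesgue)
    \<le> real DIM('a) * M ^ (DIM('a) - 1) * \<delta> * omega DIM('a)"
proof -
  define c where "c = real DIM('a) * M ^ (DIM('a) - 1) * \<delta>"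
  have G_nonneg: "0 \<le> G x" and F_le: "F x \<le> M" for x
    using assms(3-5)[of x] by linarith+
  have int_F: "integrable lebesgue (\<lambda>x. indicator (cball 0 1) x * F x ^ DIM('a))"
    and int_G: "integrable lebesgue (\<lambda>x. indicator (cball 0 1) x * G x ^ DIM('a))"
    by (rule integrable_indicator_cball_power[OF assms(1,3) F_le],
        rule integrable_indicator_cball_power[OF assms(2) G_nonneg assms(5)])
  have pointwise: "indicator (cball 0 1) x * G x ^ DIM('a) - indicator (cball 0 1) x * F x ^ DIM('a)
      \<le> c * indicator (cball 0 1) x" for x
  proof -
    have "G x ^ DIM('a) - F x ^ DIM('a) \<le> real DIM('a) * G x ^ (DIM('a) - 1) * (G x - F x)"
      using assms by (intro power_diff_le_mult_diff) auto
    also have "\<dots> \<le> c"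
      unfolding c_def using assms G_nonneg order_trans[OF G_nonneg assms(5)]
      by (intro mult_mono power_mono) auto
    finally show ?thesis
      by (simp add: indicator_def)
  qed
  have "(\<integral>x. indicator (cball 0 1) x * G x ^ DIM('a) \<partial>lebesgue)
      - (\<integral>x. indicator (cball 0 1) x * F x ^ DIM('a) \<partial>lebesgue)
    = (\<integral>x. indicator (cball 0 1) x * G x ^ DIM('a) - indicator (cball 0 1) x * F x ^ DIM('a) \<partial>lebesgue)"
    by (rule Bochner_Integration.integral_diff[symmetric, OF int_G int_F])
  also have "\<dots> \<le> (\<integral>x. c * indicator (cball (0::'a) 1) x \<partial>lebesgue)"
    using lmeasurable_cball[unfolded lmeasurable_iff_integrable]
    by (intro integral_mono Bochner_Integration.integrable_diff int_G int_F integrable_mult_right pointwise)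
  also have "\<dots> = real DIM('a) * M ^ (DIM('a) - 1) * \<delta> * omega DIM('a)"
    by (simp add: c_def measure_unit_cball)
  finally show ?thesis .
qed

lemma homogeneous_step_function_below:
  fixes F :: "'a::euclidean_space \<Rightarrow> real" and n :: nat
  assumes [measurable]: "F \<in> borel_measurable lebesgue"
    and nonneg: "\<And>x. 0 \<le> F x" and bound: "\<And>x. F x \<le> M"
    and homogeneous: "\<And>x s. s > 0 \<Longrightarrow> F (s *\<^sub>R x) = F x" and "n > 0"
  obtains G V where "\<And>x. G x \<in> V" "finite V" "\<And>v. v \<in> V \<Longrightarrow> 0 \<le> v"
    "G \<in> borel_measurable lebesgue" "\<And>x s. s > 0 \<Longrightarrow> G (s *\<^sub>R x) = G x"
    "\<And>x. G x \<le> F x" "\<And>x. F x \<le> G x + 1 / real n"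
proof -
  define G where "G x = real_of_int \<lfloor>real n * F x\<rfloor> / real n" for x
  define V where "V = (\<lambda>j. real j / real n) ` {0..nat \<lfloor>real n * M\<rfloor>}"
  have "G x \<in> V" for x
  proof -
    have "0 \<le> \<lfloor>real n * F x\<rfloor>"
      using nonneg[of x] by simp
    moreover have "\<lfloor>real n * F x\<rfloor> \<le> \<lfloor>real n * M\<rfloor>"
      using bound[of x] by (intro floor_mono mult_left_mono) auto
    ultimately have "G x = real (nat \<lfloor>real n * F x\<rfloor>) / real n"
      and "nat \<lfloor>real n * F x\<rfloor> \<in> {0..nat \<lfloor>real n * M\<rfloor>}"
      by (auto simp: G_def)
    then show ?thesis
      unfolding V_def by blast
  qed
  moreover have "finite V"
    by (simp add: V_def)
  moreover have "0 \<le> v" if "v \<in> V" for v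
    using that by (auto simp: V_def)
  moreover have "G \<in> borel_measurable lebesgue"
    unfolding G_def by measurable
  moreover have "G (s *\<^sub>R x) = G x" if "s > 0" for s x
    using homogeneous[OF that] by (simp add: G_def)
  moreover have "G x \<le> F x" for x
    using of_int_floor_le[of "real n * F x"] \<open>n > 0\<close> by (simp add: G_def field_simps)
  moreover have "F x \<le> G x + 1 / real n" for x
    using real_of_int_floor_add_one_ge[of "real n * F x"] \<open>n > 0\<close> by (simp add: G_def field_simps)
  ultimately show ?thesis
    by (rule that)
qed

text \<open>Polar coordinates: the integral over the unit ball equals \<open>1/d\<close> times the integral of
  \<open>F\<^sup>d\<close> over the unit sphere.\<close>
lemma measure_radial_set:
  fixes F :: "'a::euclidean_space \<Rightarrow> real"
  assumes [measurable]: "F \<in> borel_measurable lebesgue"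
    and nonneg: "\<And>x. 0 \<le> F x" and bound: "\<And>x. F x \<le> M"
    and homogeneous: "\<And>x s. s > 0 \<Longrightarrow> F (s *\<^sub>R x) = F x"
  shows "measure lebesgue (radial_set F) = (\<integral>x. indicator (cball 0 1) x * F x ^ DIM('a) \<partial>lebesgue)"
proof -
  define I where "I G = (\<integral>x. indicator (cball 0 1) x * G x ^ DIM('a) \<partial>lebesgue)" for G :: "'a \<Rightarrow> real"
  define K where "K = real DIM('a) * (M + 1) ^ (DIM('a) - 1) * omega DIM('a)"
  have approx: "\<bar>measure lebesgue (radial_set F) - I F\<bar> \<le> K / real n" if "n > 0" for n :: nat
  proof -
    obtain G V where G_range: "\<And>x. G x \<in> V" and V: "finite V" "\<And>v. v \<in> V \<Longrightarrow> 0 \<le> v"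
      and G [measurable]: "G \<in> borel_measurable lebesgue"
      and G_homogeneous: "\<And>x s. s > 0 \<Longrightarrow> G (s *\<^sub>R x) = G x"
      and G_le: "\<And>x. G x \<le> F x" and le_G': "\<And>x. F x \<le> G x + 1 / real n"
      using homogeneous_step_function_below[OF assms \<open>n > 0\<close>] by blast
    define G' where "G' x = G x + 1 / real n" for x
    have [measurable]: "G' \<in> borel_measurable lebesgue"
      unfolding G'_def by measurable
    have "1 / real n \<le> 1"
      using \<open>n > 0\<close> by simp
    then have G_nonneg: "0 \<le> G x" and G'_le: "G' x \<le> M + 1" for x
      using V(2)[OF G_range] G_le[of x] bound[of x] by (auto simp: G'_def)
    have "measure lebesgue (radial_set G) = I G"
      unfolding I_def using V(1) G_range V(2) G G_homogeneous by (rule measure_radial_set_finite_range)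
    moreover have "measure lebesgue (radial_set G') = I G'"
      unfolding I_def using V G_range \<open>n > 0\<close> G_homogeneous
      by (intro measure_radial_set_finite_range[where V = "(\<lambda>v. v + 1 / real n) ` V"])
        (auto simp: G'_def)
    moreover have "measure lebesgue (radial_set G) \<le> measure lebesgue (radial_set F)"
      using G_le bound by (intro measure_radial_set_mono) auto
    moreover have "measure lebesgue (radial_set F) \<le> measure lebesgue (radial_set G')"
      using le_G' G'_le by (intro measure_radial_set_mono) (auto simp: G'_def)
    moreover have "I G \<le> I F"
      unfolding I_def using G_nonneg G_le bound by (intro integral_cball_power_mono) auto
    moreover have "I F \<le> I G'"
      unfolding I_def using nonneg le_G' G'_le by (intro integral_cball_power_mono) (auto simp: G'_def)
    moreover have "I G' - I G \<le> K / real n"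
      using integral_cball_power_diff_le[of G G' "M + 1" "1 / real n"] G_nonneg G'_le
      by (simp add: I_def K_def G'_def)
    ultimately show ?thesis
      by linarith
  qed
  have "eventually (\<lambda>n. \<bar>measure lebesgue (radial_set F) - I F\<bar> \<le> K / real n) sequentially"
    using eventually_gt_at_top[of 0] by eventually_elim (rule approx)
  with lim_const_over_n[of K] have "\<bar>measure lebesgue (radial_set F) - I F\<bar> \<le> 0"
    by (intro tendsto_le[OF trivial_limit_sequentially _ tendsto_const])
  then show ?thesis
    by (simp add: I_def)
qed

section \<open>The first intrinsic volume as a mean width\<close>

lemma parallel_body_subset_radial_set:
  fixes K :: "'a::euclidean_space set"
  assumes "compact K"
  shows "parallel_body K t \<subseteq> radial_set (\<lambda>x. t + support_fun K (sgn x))"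
proof
  fix x
  assume "x \<in> parallel_body K t"
  then obtain k y where x: "x = k + y" "k \<in> K" "norm y \<le> t"
    unfolding parallel_body_def by auto
  have "norm x = x \<bullet> sgn x"
    by (cases "x = 0") (simp_all add: sgn_div_norm dot_square_norm power2_eq_square)
  also have "\<dots> = k \<bullet> sgn x + y \<bullet> sgn x"
    by (simp add: x(1) inner_add_left)
  also have "\<dots> \<le> support_fun K (sgn x) + norm y * norm (sgn x)"
    using inner_le_support_fun[OF assms x(2), of "sgn x"] norm_cauchy_schwarz[of y "sgn x"] by linarith
  also have "norm y * norm (sgn x) \<le> t"
    using x(3) order_trans[OF norm_ge_zero x(3)] by (auto simp: norm_sgn)
  finally show "x \<in> radial_set (\<lambda>x. t + support_fun K (sgn x))"
    by (simp add: radial_set_def)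
qed

text \<open>With \<open>s = |x|\<close>, \<open>a = \<langle>p, x/|x|\<rangle>\<close> and \<open>n = |p|\<close> the left-hand side is \<open>|x - p|\<^sup>2\<close>.\<close>
lemma parallel_body_radius_inequality:
  fixes s a n D t :: real
  assumes "0 \<le> s" "\<bar>a\<bar> \<le> n" "n \<le> D" "2 * D \<le> t" "0 < t" "s \<le> t + a - D\<^sup>2 / t"
  shows "s\<^sup>2 - 2 * s * a + n\<^sup>2 \<le> t\<^sup>2"
proof -
  have "0 \<le> n" "0 \<le> D"
    using assms(2,3) by linarith+
  have "n\<^sup>2 \<le> D\<^sup>2"
    using assms(3) \<open>0 \<le> n\<close> by (rule power_mono)
  show ?thesis
  proof (cases "a \<le> s")
    case True
    have "D / t \<le> 1"
      using assms(4) assms(5) \<open>0 \<le> D\<close> by (simp add: divide_le_eq)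
    then have q: "D\<^sup>2 / t \<le> D"
      using \<open>0 \<le> D\<close> mult_left_mono[of "D / t" 1 D] by (simp add: power2_eq_square)
    have "(D\<^sup>2 / t)\<^sup>2 \<le> D\<^sup>2"
      using q assms(5) by (intro power_mono) auto
    have "(s - a)\<^sup>2 \<le> (t - D\<^sup>2 / t)\<^sup>2"
      using True assms(4,6) q by (intro power_mono) auto
    also have "\<dots> = t\<^sup>2 - 2 * D\<^sup>2 + (D\<^sup>2 / t)\<^sup>2"
      using assms(5) by (simp add: power2_eq_square field_simps)
    finally have "(s - a)\<^sup>2 \<le> t\<^sup>2 - D\<^sup>2"
      using \<open>(D\<^sup>2 / t)\<^sup>2 \<le> D\<^sup>2\<close> by linarith
    moreover have "s\<^sup>2 - 2 * s * a + n\<^sup>2 = (s - a)\<^sup>2 + n\<^sup>2 - a\<^sup>2"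
      by (simp add: power2_diff)
    ultimately show ?thesis
      using \<open>n\<^sup>2 \<le> D\<^sup>2\<close> zero_le_power2[of a] by linarith
  next
    case False
    have "s\<^sup>2 - 2 * s * a = s * (s - 2 * a)"
      by (simp add: power2_eq_square algebra_simps)
    also have "\<dots> \<le> 0"
      using False assms(1) by (intro mult_nonneg_nonpos) auto
    finally have "s\<^sup>2 - 2 * s * a \<le> 0" .
    moreover have "D\<^sup>2 \<le> t\<^sup>2"
      using assms(4) \<open>0 \<le> D\<close> by (intro power_mono) auto
    ultimately show ?thesis
      using \<open>n\<^sup>2 \<le> D\<^sup>2\<close> by linarith
  qed
qed

lemma radial_set_subset_parallel_body:
  fixes K :: "'a::euclidean_space set"
  assumes K: "compact K" "K \<noteq> {}" and D: "\<And>k. k \<in> K \<Longrightarrow> norm k \<le> D"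
    and t: "2 * D \<le> t" "0 < t"
  shows "radial_set (\<lambda>x. t + support_fun K (sgn x) - D\<^sup>2 / t) \<subseteq> parallel_body K t"
proof
  fix x :: 'a
  assume "x \<in> radial_set (\<lambda>x. t + support_fun K (sgn x) - D\<^sup>2 / t)"
  then have x: "norm x \<le> t + support_fun K (sgn x) - D\<^sup>2 / t"
    by (simp add: radial_set_def)
  obtain p where p: "p \<in> K" "support_fun K (sgn x) = p \<bullet> sgn x"
    using support_fun_attained[OF K] by blast
  have "\<bar>p \<bullet> sgn x\<bar> \<le> norm p * norm (sgn x)"
    by (rule Cauchy_Schwarz_ineq2)
  also have "\<dots> \<le> norm p"
    by (rule mult_left_le) (simp_all add: norm_sgn)
  finally have "\<bar>p \<bullet> sgn x\<bar> \<le> norm p" .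
  have "x \<bullet> p = norm x * (p \<bullet> sgn x)"
    by (cases "x = 0") (simp_all add: sgn_div_norm inner_commute)
  then have "(norm (x - p))\<^sup>2 = (norm x)\<^sup>2 - 2 * norm x * (p \<bullet> sgn x) + (norm p)\<^sup>2"
    using dot_norm[of x "- p"] by simp
  also have "\<dots> \<le> t\<^sup>2"
    using \<open>\<bar>p \<bullet> sgn x\<bar> \<le> norm p\<close> D[OF p(1)] t x p(2)
    by (intro parallel_body_radius_inequality) auto
  finally have "x - p \<in> cball 0 t"
    using t by (simp add: power2_le_iff_abs_le)
  moreover have "x = p + (x - p)"
    by simp
  ultimately show "x \<in> parallel_body K t"
    unfolding parallel_body_def using p(1) by blast
qed

lemma power_first_order_remainder_le:
  fixes t e E :: real
  assumes t: "1 \<le> t" and e: "\<bar>e\<bar> \<le> E"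
  shows "t * \<bar>(t + e) ^ n - t ^ n - real n * t ^ (n - 1) * e\<bar>
    \<le> real n * real (n - 1) * (1 + E) ^ (n - 2) * E\<^sup>2 * t ^ (n - 1)"
proof (cases "n < 2 \<or> e = 0")
  case True
  have "0 \<le> E"
    using e by linarith
  with True t show ?thesis
    by (auto simp: less_2_cases_iff)
next
  case False
  then have "2 \<le> n" "e \<noteq> 0"
    by auto
  have "0 \<le> E"
    using e by linarith
  define k where "k = (1 + E) * t"
  have "E \<le> E * t"
    using mult_left_mono[of 1 t E] t \<open>0 \<le> E\<close> by simp
  then have "norm t \<le> k" "norm (t + e) \<le> k"
    using t e abs_triangle_ineq[of t e] by (auto simp: k_def algebra_simps)
  have "(((t + e) ^ n - t ^ n) / e - real n * t ^ (n - 1)) * e = (t + e) ^ n - t ^ n - real n * t ^ (n - 1) * e"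
    using \<open>e \<noteq> 0\<close> by (simp add: field_simps)
  then have "\<bar>(t + e) ^ n - t ^ n - real n * t ^ (n - 1) * e\<bar>
      = \<bar>((t + e) ^ n - t ^ n) / e - real n * t ^ (n - 1)\<bar> * \<bar>e\<bar>"
    by (metis abs_mult)
  also have "\<dots> \<le> real n * real (n - 1) * k ^ (n - 2) * \<bar>e\<bar> * \<bar>e\<bar>"
    using lemma_termdiff3[OF \<open>e \<noteq> 0\<close> \<open>norm t \<le> k\<close> \<open>norm (t + e) \<le> k\<close>, of n]
    by (intro mult_right_mono) auto
  also have "\<dots> = real n * real (n - 1) * k ^ (n - 2) * e\<^sup>2"
    by (simp add: power2_eq_square)
  also have "\<dots> \<le> real n * real (n - 1) * ((1 + E) ^ (n - 2) * t ^ (n - 2)) * E\<^sup>2"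
    using e \<open>0 \<le> E\<close> t power_mono[OF e abs_ge_zero, of 2]
    by (intro mult_mono) (auto simp: k_def power_mult_distrib)
  finally have "t * \<bar>(t + e) ^ n - t ^ n - real n * t ^ (n - 1) * e\<bar>
      \<le> real n * real (n - 1) * (1 + E) ^ (n - 2) * E\<^sup>2 * (t * t ^ (n - 2))"
    using t by (simp add: mult_left_mono algebra_simps)
  also have "t * t ^ (n - 2) = t ^ (n - 1)"
    using \<open>2 \<le> n\<close> by (simp flip: power_Suc add: Suc_diff_Suc numeral_2_eq_2)
  finally show ?thesis .
qed

lemma integral_cball_power_expansion:
  fixes H :: "'a::euclidean_space \<Rightarrow> real"
  assumes [measurable]: "H \<in> borel_measurable lebesgue" and H: "\<And>x. \<bar>H x\<bar> \<le> E" and t: "1 \<le> t"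
  defines "d \<equiv> DIM('a)"
  shows "\<bar>(\<integral>x. indicator (cball 0 1) x * (t + H x) ^ d \<partial>lebesgue) - omega d * t ^ d
      - real d * t ^ (d - 1) * (\<integral>x. indicator (cball 0 1) x * H x \<partial>lebesgue)\<bar>
    \<le> omega d * (real d * real (d - 1) * (1 + E) ^ (d - 2) * E\<^sup>2) * t ^ (d - 1) / t"
proof -
  define c where "c = real d * real (d - 1) * (1 + E) ^ (d - 2) * E\<^sup>2 * t ^ (d - 1) / t"
  define R where "R x = (t + H x) ^ d - t ^ d - real d * t ^ (d - 1) * H x" for x
  have R_le: "\<bar>R x\<bar> \<le> c" for x
    using power_first_order_remainder_le[OF t H, of x d] t by (simp add: R_def c_def field_simps)
  have int_H: "integrable lebesgue (\<lambda>x. indicator (cball 0 1) x * H x)"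
    by (rule integrable_indicator_cball_mult[OF assms(1) H])
  have int_R: "integrable lebesgue (\<lambda>x. indicator (cball 0 1) x * R x)"
    unfolding R_def using R_le by (intro integrable_indicator_cball_mult[where B = c]) (auto simp: R_def)
  have int_A: "integrable lebesgue (\<lambda>x. indicator (cball 0 1) x * (t ^ d + real d * t ^ (d - 1) * H x))"
  proof (rule integrable_indicator_cball_mult)
    show "(\<lambda>x. t ^ d + real d * t ^ (d - 1) * H x) \<in> borel_measurable lebesgue"
      by measurable
    show "\<bar>t ^ d + real d * t ^ (d - 1) * H x\<bar> \<le> t ^ d + real d * t ^ (d - 1) * E" for x
      using t H[of x] abs_triangle_ineq[of "t ^ d" "real d * t ^ (d - 1) * H x"]
        mult_left_mono[OF H[of x], of "real d * t ^ (d - 1)"]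
      by (simp add: abs_mult)
  qed
  have "(\<integral>x. indicator (cball 0 1) x * (t + H x) ^ d \<partial>lebesgue)
      = (\<integral>x. indicator (cball 0 1) x * (t ^ d + real d * t ^ (d - 1) * H x)
          + indicator (cball 0 1) x * R x \<partial>lebesgue)"
    by (simp add: R_def algebra_simps)
  also have "\<dots> = omega d * t ^ d + real d * t ^ (d - 1) * (\<integral>x. indicator (cball 0 1) x * H x \<partial>lebesgue)
      + (\<integral>x. indicator (cball 0 1) x * R x \<partial>lebesgue)"
    unfolding Bochner_Integration.integral_add[OF int_A int_R]
    using integral_indicator_cball_affine[OF int_H, of "t ^ d" "real d * t ^ (d - 1)"]
    by (simp add: d_def)
  finally have "(\<integral>x. indicator (cball 0 1) x * (t + H x) ^ d \<partial>lebesgue) - omega d * t ^ d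
      - real d * t ^ (d - 1) * (\<integral>x. indicator (cball 0 1) x * H x \<partial>lebesgue)
    = (\<integral>x. indicator (cball 0 1) x * R x \<partial>lebesgue)"
    by simp
  also have "\<bar>\<dots>\<bar> \<le> (\<integral>x. c * indicator (cball (0::'a) 1) x \<partial>lebesgue)"
    by (rule integral_abs_bound_integral[OF int_R
          integrable_mult_right[OF lmeasurable_cball[unfolded lmeasurable_iff_integrable]]])
      (use R_le in \<open>auto simp: indicator_def\<close>)
  also have "\<dots> = omega d * (real d * real (d - 1) * (1 + E) ^ (d - 2) * E\<^sup>2) * t ^ (d - 1) / t"
    by (simp add: c_def d_def measure_unit_cball)
  finally show ?thesis .
qed

text \<open>\<open>support_integral K\<close> is \<open>\<omega>\<^sub>d/2\<close> times the mean width of \<open>K\<close>.\<close>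
definition support_integral :: "'a::euclidean_space set \<Rightarrow> real" where
  "support_integral K = (\<integral>x. indicator (cball 0 1) x * support_fun K (sgn x) \<partial>lebesgue)"

lemma integrable_support_fun_sgn:
  fixes K :: "'a::euclidean_space set"
  assumes "compact K" "K \<noteq> {}"
  shows "integrable lebesgue (\<lambda>x. indicator (cball 0 1) x * support_fun K (sgn x))"
proof -
  obtain D where "\<And>k. k \<in> K \<Longrightarrow> norm k \<le> D"
    using compact_imp_bounded[OF assms(1)] bounded_iff by blast
  with assms show ?thesis
    by (intro integrable_indicator_cball_mult[OF _ abs_support_fun_sgn_le]) auto
qed

lemma support_fun_sgn_scaleR: "s > 0 \<Longrightarrow> support_fun K (sgn (s *\<^sub>R x)) = support_fun K (sgn x)"
  by (simp add: sgn_scaleR)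

lemma lmeasurable_parallel_body: "compact K \<Longrightarrow> parallel_body K t \<in> lmeasurable"
  unfolding parallel_body_def by (intro lmeasurable_compact compact_sums compact_cball)

lemma vol_parallel_body_le_integral:
  fixes K :: "'a::euclidean_space set"
  assumes K: "compact K" "K \<noteq> {}" and D: "\<And>k. k \<in> K \<Longrightarrow> norm k \<le> D" and "D \<le> t"
  shows "vol (parallel_body K t)
    \<le> (\<integral>x. indicator (cball 0 1) x * (t + support_fun K (sgn x)) ^ DIM('a) \<partial>lebesgue)"
proof -
  have H: "- D \<le> support_fun K (sgn x)" "support_fun K (sgn x) \<le> D" for x :: 'a
    using abs_support_fun_sgn_le[OF K D, of x] by auto
  have "vol (parallel_body K t) \<le> measure lebesgue (radial_set (\<lambda>x. t + support_fun K (sgn x)))"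
    unfolding vol_def
  proof (rule measure_mono_fmeasurable[OF _ fmeasurableD[OF lmeasurable_parallel_body[OF K(1)]]])
    show "parallel_body K t \<subseteq> radial_set (\<lambda>x. t + support_fun K (sgn x))"
      using K(1) by (rule parallel_body_subset_radial_set)
    show "radial_set (\<lambda>x. t + support_fun K (sgn x)) \<in> lmeasurable"
      by (rule radial_set_lmeasurable[where M = "t + D"]) (use K H in auto)
  qed
  also have "\<dots> = (\<integral>x. indicator (cball 0 1) x * (t + support_fun K (sgn x)) ^ DIM('a) \<partial>lebesgue)"
  proof (rule measure_radial_set[where M = "t + D"])
    show "0 \<le> t + support_fun K (sgn x)" "t + support_fun K (sgn x) \<le> t + D" for x :: 'a
      using H[of x] \<open>D \<le> t\<close> by linarith+
  qed (use K in \<open>auto simp: support_fun_sgn_scaleR\<close>)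
  finally show ?thesis .
qed

lemma integral_le_vol_parallel_body:
  fixes K :: "'a::euclidean_space set"
  assumes K: "compact K" "K \<noteq> {}" and D: "\<And>k. k \<in> K \<Longrightarrow> norm k \<le> D" and t: "2 * D \<le> t" "0 < t"
  shows "(\<integral>x. indicator (cball 0 1) x * (t + (support_fun K (sgn x) - D\<^sup>2 / t)) ^ DIM('a) \<partial>lebesgue)
    \<le> vol (parallel_body K t)"
proof -
  define F where "F = (\<lambda>x::'a. t + (support_fun K (sgn x) - D\<^sup>2 / t))"
  have [measurable]: "F \<in> borel_measurable lebesgue"
    unfolding F_def using K by measurable
  have H: "- D \<le> support_fun K (sgn x)" "support_fun K (sgn x) \<le> D" for x :: 'a
    using abs_support_fun_sgn_le[OF K D, of x] by auto
  have "0 \<le> D"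
    using H(1,2)[of 0] by linarith
  then have "D\<^sup>2 / t \<le> D" "0 \<le> D\<^sup>2 / t"
    using t mult_left_mono[of D t D] by (simp_all add: power2_eq_square divide_le_eq)
  then have F_nonneg: "0 \<le> F x" and F_le: "F x \<le> t + D" for x
    using H[of x] t unfolding F_def by linarith+
  have "measure lebesgue (radial_set F) = (\<integral>x. indicator (cball 0 1) x * F x ^ DIM('a) \<partial>lebesgue)"
  proof (rule measure_radial_set[OF _ F_nonneg F_le])
    show "F (s *\<^sub>R x) = F x" if "s > 0" for s x
      using that by (simp add: F_def support_fun_sgn_scaleR)
  qed measurable
  then have "(\<integral>x. indicator (cball 0 1) x * F x ^ DIM('a) \<partial>lebesgue) = measure lebesgue (radial_set F)"
    by simp
  also have "\<dots> \<le> vol (parallel_body K t)"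
    unfolding vol_def
  proof (rule measure_mono_fmeasurable[OF _ radial_set_in_sets lmeasurable_parallel_body[OF K(1)]])
    show "radial_set F \<subseteq> parallel_body K t"
      using radial_set_subset_parallel_body[OF K D t] by (simp add: F_def algebra_simps)
  qed measurable
  finally show ?thesis
    by (simp add: F_def)
qed

lemma vol_parallel_body_expansion:
  fixes K :: "'a::euclidean_space set"
  assumes K: "compact K" "K \<noteq> {}" and D: "\<And>k. k \<in> K \<Longrightarrow> norm k \<le> D" "1 \<le> D"
    and t: "2 * D \<le> t"
  defines "d \<equiv> DIM('a)" and "E \<equiv> D + D\<^sup>2"
  shows "\<bar>vol (parallel_body K t) - omega d * t ^ d - real d * t ^ (d - 1) * support_integral K\<bar>
    \<le> omega d * (real d * real (d - 1) * (1 + E) ^ (d - 2) * E\<^sup>2 + real d * D\<^sup>2) * t ^ (d - 1) / t"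
proof -
  define c where "c = omega d * (real d * real (d - 1) * (1 + E) ^ (d - 2) * E\<^sup>2)"
  define I where "I G = (\<integral>x. indicator (cball 0 1) x * G x \<partial>lebesgue)" for G :: "'a \<Rightarrow> real"
  define H where "H x = support_fun K (sgn x)" for x :: 'a
  have H_measurable [measurable]: "H \<in> borel_measurable lebesgue"
    unfolding H_def using K by measurable
  have H: "\<bar>H x\<bar> \<le> D" for x
    unfolding H_def by (rule abs_support_fun_sgn_le[OF K D(1)])
  have "1 \<le> t" "0 < t"
    using t D(2) by linarith+
  then have "D\<^sup>2 / t \<le> D\<^sup>2" "0 \<le> D\<^sup>2 / t"
    using mult_left_mono[of 1 t "D\<^sup>2"] by (simp_all add: divide_le_eq)
  then have H_E: "\<bar>H x\<bar> \<le> E" and H'_E: "\<bar>H x - D\<^sup>2 / t\<bar> \<le> E" for x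
    using H[of x, unfolded abs_le_iff] zero_le_power2[of D] unfolding E_def abs_le_iff
    by (intro conjI; linarith)+
  have "vol (parallel_body K t) \<le> I (\<lambda>x. (t + H x) ^ d)"
    using vol_parallel_body_le_integral[OF K D(1)] t D(2) by (simp add: I_def H_def d_def)
  also have "\<dots> \<le> omega d * t ^ d + real d * t ^ (d - 1) * I H + c * t ^ (d - 1) / t"
    using integral_cball_power_expansion[OF H_measurable H_E \<open>1 \<le> t\<close>]
    by (simp add: I_def c_def d_def abs_le_iff)
  finally have upper: "vol (parallel_body K t) \<le> omega d * t ^ d + real d * t ^ (d - 1) * I H + c * t ^ (d - 1) / t" .
  have shift: "I (\<lambda>x. H x - D\<^sup>2 / t) = I H - omega d * D\<^sup>2 / t"
    using integral_indicator_cball_affine[of H "- (D\<^sup>2 / t)" 1] integrable_indicator_cball_mult[OF H_measurable H]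
    by (simp add: I_def d_def algebra_simps)
  have "omega d * t ^ d + real d * t ^ (d - 1) * I H - (c + omega d * real d * D\<^sup>2) * t ^ (d - 1) / t
      = omega d * t ^ d + real d * t ^ (d - 1) * I (\<lambda>x. H x - D\<^sup>2 / t) - c * t ^ (d - 1) / t"
    unfolding shift using \<open>0 < t\<close> by (simp add: field_simps)
  also have "\<dots> \<le> I (\<lambda>x. (t + (H x - D\<^sup>2 / t)) ^ d)"
    using integral_cball_power_expansion[of "\<lambda>x. H x - D\<^sup>2 / t", OF _ H'_E \<open>1 \<le> t\<close>]
    by (simp add: I_def c_def d_def abs_le_iff)
  also have "\<dots> \<le> vol (parallel_body K t)"
    using integral_le_vol_parallel_body[OF K D(1) t \<open>0 < t\<close>] by (simp add: I_def H_def d_def)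
  finally have lower: "omega d * t ^ d + real d * t ^ (d - 1) * I H
      - (c + omega d * real d * D\<^sup>2) * t ^ (d - 1) / t \<le> vol (parallel_body K t)" .
  have "c * t ^ (d - 1) / t \<le> (c + omega d * real d * D\<^sup>2) * t ^ (d - 1) / t"
    using omega_pos[of d] \<open>0 < t\<close> by (simp add: divide_right_mono mult_right_mono)
  with upper lower show ?thesis
    unfolding support_integral_def H_def[symmetric] I_def[symmetric] abs_le_iff c_def
    by (simp add: algebra_simps)
qed

lemma V1_eq_support_integral:
  fixes K :: "'a::euclidean_space set"
  assumes K: "compact K" "K \<noteq> {}"
  shows "V1 K = real DIM('a) * support_integral K / omega (DIM('a) - 1)"
proof -
  obtain D0 where "D0 > 0" "\<And>k. k \<in> K \<Longrightarrow> norm k \<le> D0"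
    using compact_imp_bounded[OF K(1)] bounded_pos by blast
  then have D: "\<And>k. k \<in> K \<Longrightarrow> norm k \<le> max D0 1" "1 \<le> max D0 1"
    by (auto intro: le_max_iff_disj[THEN iffD2])
  then obtain Q where Q: "\<And>t. 2 * max D0 1 \<le> t \<Longrightarrow>
      \<bar>vol (parallel_body K t) - omega DIM('a) * t ^ DIM('a)
        - real DIM('a) * t ^ (DIM('a) - 1) * support_integral K\<bar> \<le> Q * t ^ (DIM('a) - 1) / t"
    using vol_parallel_body_expansion[OF K] by fast
  define w where "w = omega (DIM('a) - 1)"
  have "w > 0"
    unfolding w_def by (rule omega_pos)
  define f where "f = (\<lambda>n::nat. (vol (parallel_body K (real n)) - omega DIM('a) * real n ^ DIM('a))
      / (w * real n ^ (DIM('a) - 1)))"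
  define L where "L = real DIM('a) * support_integral K / w"
  have "eventually (\<lambda>n. norm (f n - L) \<le> (Q / w) / real n) sequentially"
    using eventually_ge_at_top[of "nat \<lceil>2 * max D0 1\<rceil>"]
  proof eventually_elim
    case (elim n)
    then have n: "2 * max D0 1 \<le> real n" "0 < real n"
      by linarith+
    then have "0 < w * real n ^ (DIM('a) - 1)"
      using \<open>w > 0\<close> by simp
    moreover have "f n - L = (vol (parallel_body K (real n)) - omega DIM('a) * real n ^ DIM('a)
        - real DIM('a) * real n ^ (DIM('a) - 1) * support_integral K) / (w * real n ^ (DIM('a) - 1))"
      using \<open>w > 0\<close> n(2) by (simp add: f_def L_def field_simps)
    ultimately have "norm (f n - L) = \<bar>vol (parallel_body K (real n)) - omega DIM('a) * real n ^ DIM('a)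
        - real DIM('a) * real n ^ (DIM('a) - 1) * support_integral K\<bar> / (w * real n ^ (DIM('a) - 1))"
      by simp
    also have "\<dots> \<le> (Q * real n ^ (DIM('a) - 1) / real n) / (w * real n ^ (DIM('a) - 1))"
      using \<open>0 < w * real n ^ (DIM('a) - 1)\<close> by (intro divide_right_mono[OF Q[OF n(1)]]) simp
    also have "\<dots> = (Q / w) / real n"
      using \<open>w > 0\<close> n(2) by (simp add: field_simps)
    finally show ?case .
  qed
  then have "(\<lambda>n. f n - L) \<longlonglongrightarrow> 0"
    by (rule Lim_null_comparison[OF _ lim_const_over_n])
  then have "lim f = L"
    by (simp add: LIM_zero_iff limI)
  then show ?thesis
    by (simp add: V1_def f_def L_def w_def)
qed

lemma V1_uminus:
  fixes K :: "'a::euclidean_space set"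
  shows "V1 (uminus ` K) = V1 K"
proof -
  have "parallel_body (uminus ` K) t = uminus ` parallel_body K t" for t
    unfolding parallel_body_def
  proof (intro equalityI subsetI)
    fix z
    assume "z \<in> {x + y |x y. x \<in> uminus ` K \<and> y \<in> cball 0 t}"
    then obtain k y where "z = - (k + - y)" "k \<in> K" "- y \<in> cball 0 t"
      by auto
    then show "z \<in> uminus ` {x + y |x y. x \<in> K \<and> y \<in> cball 0 t}"
      by blast
  next
    fix z
    assume "z \<in> uminus ` {x + y |x y. x \<in> K \<and> y \<in> cball 0 t}"
    then obtain k y where "z = - k + - y" "k \<in> K" "- y \<in> cball 0 t"
      by auto
    then show "z \<in> {x + y |x y. x \<in> uminus ` K \<and> y \<in> cball 0 t}"
      by blast
  qed
  moreover have "vol (uminus ` S) = vol S" for S :: "'a set"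
    using measure_lebesgue_affine[of "-1" 0 S] by (simp add: vol_def)
  ultimately show ?thesis
    by (simp add: V1_def)
qed

lemma support_integral_ball_dual_add:
  fixes X :: "'a::euclidean_space set"
  assumes r: "r > 0" and X: "X \<noteq> {}" and A: "ball_dual r X \<noteq> {}"
  shows "support_integral (ball_dual r X) + support_integral (uminus ` ball_dual r (ball_dual r X))
    = r * omega DIM('a)"
proof -
  define A where "A = ball_dual r X"
  define B where "B = uminus ` ball_dual r A"
  have "X \<subseteq> ball_dual r A"
    unfolding A_def by (rule subset_ball_dual_ball_dual)
  then have "ball_dual r A \<noteq> {}"
    using X by blast
  then have "B \<noteq> {}"
    by (simp add: B_def)
  moreover have "compact B"
    unfolding B_def A_def using compact_negations[OF compact_ball_dual[OF A]] by simp
  ultimately have int_B: "integrable lebesgue (\<lambda>x. indicator (cball 0 1) x * support_fun B (sgn x))"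
    by (intro integrable_support_fun_sgn)
  have int_A: "integrable lebesgue (\<lambda>x. indicator (cball 0 1) x * support_fun A (sgn x))"
    using X A by (simp add: A_def compact_ball_dual integrable_support_fun_sgn)
  have "AE x in lebesgue. x \<noteq> 0"
    by (intro AE_not_in[of "{0}", simplified]) simp
  then have "AE x in lebesgue. indicator (cball 0 1) x * support_fun A (sgn x)
      + indicator (cball 0 1) x * support_fun B (sgn x) = indicator (cball (0::'a) 1) x * r"
  proof eventually_elim
    case (elim x)
    then have "support_fun A (sgn x) + support_fun B (sgn x) = r"
      using support_fun_ball_dual_add[OF r X A, of "sgn x"]
      by (simp add: A_def B_def support_fun_uminus norm_sgn)
    then show ?case
      by (simp only: distrib_left[symmetric])
  qed
  then have "support_integral A + support_integral B = (\<integral>x. indicator (cball (0::'a) 1) x * r \<partial>lebesgue)"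
    unfolding support_integral_def Bochner_Integration.integral_add[OF int_A int_B, symmetric]
    by (intro integral_cong_AE borel_measurable_integrable Bochner_Integration.integrable_add int_A int_B)
      (simp_all add: lmeasurable_iff_integrable[symmetric])
  then show ?thesis
    by (simp add: A_def B_def measure_unit_cball)
qed

lemma V1_add_V1_ball_dual:
  fixes X :: "'a::euclidean_space set"
  assumes r: "r > 0" and X: "X \<noteq> {}" and A: "ball_dual r X \<noteq> {}"
  shows "V1 (ball_dual r X) + V1 (ball_dual r (ball_dual r X))
    = real DIM('a) * omega DIM('a) / omega (DIM('a) - 1) * r"
proof -
  have "ball_dual r (ball_dual r X) \<noteq> {}"
    using subset_ball_dual_ball_dual[of X r] X by auto
  have "V1 (ball_dual r (ball_dual r X)) = V1 (uminus ` ball_dual r (ball_dual r X))"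
    by (simp add: V1_uminus)
  also have "\<dots> = real DIM('a) * support_integral (uminus ` ball_dual r (ball_dual r X)) / omega (DIM('a) - 1)"
    using \<open>ball_dual r (ball_dual r X) \<noteq> {}\<close> A
    by (intro V1_eq_support_integral compact_negations compact_ball_dual) auto
  finally show ?thesis
    using V1_eq_support_integral[OF compact_ball_dual[OF X] A] support_integral_ball_dual_add[OF r X A]
    by (simp add: add_divide_distrib[symmetric] distrib_left[symmetric] mult.commute)
qed

theorem corollary1:
  fixes X :: "'a::euclidean_space set" and r R :: real and A B :: "'a set"
  assumes "DIM('a) > 1" and "r > 0" and "X \<noteq> {}"
    and "A = ball_dual r X"
    and "0 < R" and "R < r"
    and "B = cball 0 (r - R)"
    and "vol A = vol B"
  shows "ball_dual r B = cball 0 R \<and>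
         V1 A + V1 (ball_dual r A) = real DIM('a) * omega DIM('a) / omega (DIM('a) - 1) * r \<and>
         real DIM('a) * omega DIM('a) / omega (DIM('a) - 1) * r = V1 B + V1 (ball_dual r B)"
proof (intro conjI)
  show "ball_dual r B = cball 0 R"
    using ball_dual_cball[of "r - R" r] assms(5-7) by simp
  have "vol B > 0"
    using content_cball_pos[of "r - R" "0::'a"] assms(6,7) by (simp add: vol_def measure_completion)
  then have "A \<noteq> {}"
    using assms(8) by (auto simp: vol_def)
  then show "V1 A + V1 (ball_dual r A) = real DIM('a) * omega DIM('a) / omega (DIM('a) - 1) * r"
    using V1_add_V1_ball_dual[OF assms(2,3)] assms(4) by simp
  have "ball_dual r (cball 0 R) = cball (0::'a) (r - R)"
    using assms(5,6) by (intro ball_dual_cball) auto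
  then have "B = ball_dual r (cball 0 R)"
    using assms(7) by simp
  moreover have "B \<noteq> {}"
    using assms(6,7) by simp
  ultimately show "real DIM('a) * omega DIM('a) / omega (DIM('a) - 1) * r = V1 B + V1 (ball_dual r B)"
    using V1_add_V1_ball_dual[OF assms(2), of "cball (0::'a) R"] assms(5) by simp
qed

end
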